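(* Let $K$ be a field, $V$ a $K$-vector space, and $(V_x)_{x\in E}$ a family of subspaces of $V$ indexed by a finite set $E$, representing the polymatroid $(E,f)$ with $f(S)=\dim\big(\sum_{x\in S}V_x\big)$. Let $W_1,W_2,W_3$ be three pairwise distinct one-dimensional subspaces of $K^2$ (a linear representation of $U_{2,3}$). Define $g$ on subsets of $E\times\{1,2,3\}$ by $g(S)=\dim\big(\sum_{(x,i)\in S}V_x\otimes W_i\big)$, the sum taken inside $V\otimes_K K^2$. Then $(E\times\{1,2,3\},g)$ is a tensor product of $(E,f)$ and $U_{2,3}$, and for all $A_1,A_2,A_3\subseteq E$, writing $U_i=\sum_{x\in A_i}V_x$, \[ g\big((A_1\times\{1\})\cup(A_2\times\{2\})\cup(A_3\times\{3\})\big)=f(A_1)+f(A_2)+f(A_3)-\dim(U_1\cap U_2\cap U_3). \]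
   Context: A polymatroid $(E,f)$ consists of a finite ground set $E$ and a function $f\colon 2^E\to\mathbb{R}$ with $f(\emptyset)=0$ that is monotone and submodular. The uniform matroid $U_{2,3}$ is the polymatroid on $\{1,2,3\}$ with rank function $r(T)=\min\{|T|,2\}$. A tensor product of polymatroids $(E_1,f_1)$ and $(E_2,f_2)$ is a polymatroid $(E_1\times E_2,g)$ such that $g(S\times T)=f_1(S)f_2(T)$ for all $S\subseteq E_1$, $T\subseteq E_2$. *)

theory Defs
  imports "HOL-Analysis.Analysis" "HOL-Library.Product_Plus"
begin

definition polymatroid :: "'a set \<Rightarrow> ('a set \<Rightarrow> real) \<Rightarrow> bool" where
  "polymatroid E f \<longleftrightarrow> finite E \<and> f {} = 0 \<and>
     (\<forall>S T. S \<subseteq> T \<and> T \<subseteq> E \<longrightarrow> f S \<le> f T) \<and>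
     (\<forall>S T. S \<subseteq> E \<and> T \<subseteq> E \<longrightarrow> f (S \<union> T) + f (S \<inter> T) \<le> f S + f T)"

definition is_tensor_product ::
  "'a set \<Rightarrow> ('a set \<Rightarrow> real) \<Rightarrow> 'b set \<Rightarrow> ('b set \<Rightarrow> real) \<Rightarrow> (('a \<times> 'b) set \<Rightarrow> real) \<Rightarrow> bool" where
  "is_tensor_product E1 f1 E2 f2 g \<longleftrightarrow> polymatroid (E1 \<times> E2) g \<and>
     (\<forall>S T. S \<subseteq> E1 \<and> T \<subseteq> E2 \<longrightarrow> g (S \<times> T) = f1 S * f2 T)"

definition U23_rank :: "nat set \<Rightarrow> real" where
  "U23_rank T = real (min (card T) 2)"

text \<open>We identify V \<otimes>_K K^2 with V \<times> V via v \<otimes> (a,b) \<mapsto> (a v, b v).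
  The scalar multiplication on pairs is componentwise.\<close>

definition pair_scale :: "('k \<Rightarrow> 'v \<Rightarrow> 'v) \<Rightarrow> 'k \<Rightarrow> 'v \<times> 'v \<Rightarrow> 'v \<times> 'v" where
  "pair_scale s c p = (s c (fst p), s c (snd p))"

abbreviation K2_scale :: "'k::field \<Rightarrow> 'k \<times> 'k \<Rightarrow> 'k \<times> 'k" where
  "K2_scale \<equiv> pair_scale (*)"

text \<open>Image of the subspace U \<otimes> W in V \<otimes> K^2 = V \<times> V: span of pure tensors u \<otimes> w.\<close>
definition tensor_sub ::
  "('k::field \<Rightarrow> 'v::ab_group_add \<Rightarrow> 'v) \<Rightarrow> 'v set \<Rightarrow> ('k \<times> 'k) set \<Rightarrow> ('v \<times> 'v) set" where
  "tensor_sub s U W = module.span (pair_scale s)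
      {(s (fst w) u, s (snd w) u) | u w. u \<in> U \<and> w \<in> W}"

end

theory Submission
  imports Defs
begin

text \<open>Identify \<open>V \<otimes> K\<^sup>2\<close> with \<open>V \<times> V\<close> and choose generators \<open>w\<^sub>i\<close> of the lines \<open>W\<^sub>i\<close>. Then
  \<open>V\<^sub>x \<otimes> W\<^sub>i\<close> is the image of \<open>V\<^sub>x\<close> under the injective linear map \<open>u \<mapsto> u \<otimes> w\<^sub>i\<close>, so \<open>g\<close> is
  the dimension function of a family of finite-dimensional subspaces and hence a polymatroid.
  Since \<open>w\<^sub>1, w\<^sub>2\<close> are independent, \<open>U\<^sub>1 \<otimes> w\<^sub>1\<close> and \<open>U\<^sub>2 \<otimes> w\<^sub>2\<close> meet only in \<open>0\<close>; writing
  \<open>w\<^sub>3 = \<alpha> w\<^sub>1 + \<beta> w\<^sub>2\<close> with \<open>\<alpha>, \<beta> \<noteq> 0\<close> (the lines are pairwise distinct) one finds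
  \<open>(U\<^sub>1 \<otimes> w\<^sub>1 + U\<^sub>2 \<otimes> w\<^sub>2) \<inter> U\<^sub>3 \<otimes> w\<^sub>3 = (U\<^sub>1 \<inter> U\<^sub>2 \<inter> U\<^sub>3) \<otimes> w\<^sub>3\<close>.
  Grassmann's formula, applied twice, gives the dimension formula, and taking \<open>A\<^sub>i\<close> to be
  \<open>S\<close> or \<open>{}\<close> according to whether \<open>i \<in> T\<close> turns it into \<open>g (S \<times> T) = f S \<cdot> min |T| 2\<close>.\<close>

section \<open>Finite-dimensional subspaces\<close>

context vector_space
begin

lemma finite_basis_exists:
  assumes "finite F" "X \<subseteq> span F"
  obtains B where "B \<subseteq> X" "independent B" "X \<subseteq> span B" "card B = dim X" "finite B"
proof -
  obtain B where B: "B \<subseteq> X" "independent B" "X \<subseteq> span B" "card B = dim X"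
    using basis_exists by blast
  have "finite B" using independent_span_bound[OF assms(1) B(2)] B(1) assms(2) by blast
  with B that show ?thesis by blast
qed

lemma dim_mono_finite_span:
  assumes "X \<subseteq> Y" "finite F" "Y \<subseteq> span F"
  shows "dim X \<le> dim Y"
proof -
  obtain C where "C \<subseteq> Y" "independent C" "Y \<subseteq> span C" "card C = dim Y" "finite C"
    by (rule finite_basis_exists[OF assms(2,3)])
  moreover have "dim X \<le> card C"
    using \<open>Y \<subseteq> span C\<close> \<open>finite C\<close> assms(1) by (intro dim_le_card) auto
  ultimately show ?thesis by simp
qed

lemma dim_zero_subspace: "dim {0} = 0"
  using dim_span[of "{}"] dim_eq_card_independent[OF independent_empty] by simp

lemma span_Un_span_left: "span (span A \<union> B) = span (A \<union> B)"
  by (simp add: span_Un span_span)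

lemma span_Un3_span: "span (span A \<union> span B \<union> span C) = span (A \<union> B \<union> C)"
  by (metis span_Un_span_left sup_commute sup_assoc)

lemma independent_Diff_Int_span:
  assumes "independent D" "C \<subseteq> D"
  shows "(D - C) \<inter> span C = {}"
proof -
  have "z \<notin> span C" if "z \<in> D - C" for z
  proof -
    have "z \<notin> span (D - {z})" using assms(1) that dependent_def by blast
    moreover have "span C \<subseteq> span (D - {z})" using that assms(2) by (intro span_mono) blast
    ultimately show ?thesis by blast
  qed
  then show ?thesis by blast
qed

lemma span_Un_subspaces:
  assumes "subspace A" "subspace B"
  shows "span (A \<union> B) = {a + b | a b. a \<in> A \<and> b \<in> B}"
proof -
  have "span A = A" "span B = B" using assms by simp_all
  then show ?thesis by (simp only: span_Un)
qed

text \<open>A basis \<open>C\<close> of \<open>X\<close> extends to a basis \<open>D\<close> of \<open>X + Y\<close>;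
  then \<open>D - C \<subseteq> Y\<close>, and together with a basis of \<open>X \<inter> Y\<close> it forms a basis of \<open>Y\<close>.\<close>

lemma dim_span_Un_add_dim_Int:
  assumes X: "subspace X" and Y: "subspace Y" and F: "finite F" "X \<subseteq> span F" "Y \<subseteq> span F"
  shows "dim (span (X \<union> Y)) + dim (X \<inter> Y) = dim X + dim Y"
proof -
  obtain B where B: "B \<subseteq> X \<inter> Y" "independent B" "X \<inter> Y \<subseteq> span B" "card B = dim (X \<inter> Y)"
    using basis_exists by blast
  obtain C where C: "B \<subseteq> C" "C \<subseteq> X" "independent C" "X \<subseteq> span C"
    using maximal_independent_subset_extend[of B X] B by blast
  obtain D where D: "C \<subseteq> D" "D \<subseteq> X \<union> Y" "independent D" "X \<union> Y \<subseteq> span D"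
    using maximal_independent_subset_extend[of C "X \<union> Y"] C by blast
  have "finite D" using independent_span_bound[OF F(1) D(3)] D(2) F(2,3) by blast
  then have fin: "finite B" "finite C" "finite (D - C)"
    using C(1) D(1) by (auto intro: finite_subset)
  have DC_Y: "D - C \<subseteq> Y"
    using independent_Diff_Int_span[OF D(3,1)] D(2) C(4) by blast
  have "Y \<subseteq> span (B \<union> (D - C))"
  proof
    fix y assume y: "y \<in> Y"
    then obtain c d where cd: "y = c + d" "c \<in> span C" "d \<in> span (D - C)"
      using D(1,4) span_Un[of C "D - C"] by (auto simp: Un_absorb1 Un_Diff_cancel)
    have "d \<in> Y" using cd(3) span_minimal[OF DC_Y Y] by blast
    then have "c \<in> Y" using y cd(1) subspace_diff[OF Y] by (metis add_diff_cancel)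
    moreover have "c \<in> X" using cd(2) span_minimal[OF C(2) X] by blast
    ultimately have "c \<in> span B" using B(3) by blast
    then show "y \<in> span (B \<union> (D - C))"
      using cd span_add span_mono[of B "B \<union> (D - C)"] span_mono[of "D - C" "B \<union> (D - C)"]
      by blast
  qed
  then have "dim Y = card (B \<union> (D - C))"
  proof (intro basis_card_eq_dim[symmetric])
    show "independent (B \<union> (D - C))"
      using B(1) C(1) D(1) by (intro independent_mono[OF D(3)]) auto
  qed (use B(1) DC_Y in auto)
  also have "\<dots> = card B + card (D - C)"
    using fin B(1) C(1) by (intro card_Un_disjoint) auto
  finally have dimY: "dim Y = card B + card (D - C)" .
  have "dim (span (X \<union> Y)) = card D"
    using basis_card_eq_dim[OF D(2) D(4) D(3)] by simp
  also have "\<dots> = card C + card (D - C)"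
    using \<open>finite D\<close> D(1) by (simp add: card_Diff_subset card_mono finite_subset)
  finally show ?thesis
    using dimY B(4) basis_card_eq_dim[OF C(2,4,3)] by simp
qed

lemma dim_image_inj:
  assumes "vector_space s2" "module_hom scale s2 h" "inj h" "subspace U"
  shows "vector_space.dim s2 (h ` U) = dim U"
proof -
  interpret v2: vector_space s2 by (rule assms(1))
  interpret hm: module_hom scale s2 h by (rule assms(2))
  obtain B where B: "B \<subseteq> U" "independent B" "U \<subseteq> span B" "card B = dim U"
    using basis_exists by blast
  have "span B = U" using span_subspace[OF B(1,3) assms(4)] .
  then have "h ` U = v2.span (h ` B)" using hm.span_image by simp
  moreover have "v2.independent (h ` B)"
    using hm.independent_injective_image[OF B(2)] assms(3) inj_on_subset by blast
  ultimately have "v2.dim (h ` U) = card (h ` B)" using v2.dim_span_eq_card_independent by simp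
  also have "\<dots> = card B" using card_image[of h B] assms(3) inj_on_subset by blast
  finally show ?thesis using B(4) by simp
qed

lemma one_dim_subspace_eq_span_singleton:
  assumes "subspace W" "dim W = 1"
  obtains w where "w \<noteq> 0" "W = span {w}"
proof -
  obtain B where B: "B \<subseteq> W" "independent B" "W \<subseteq> span B" "card B = dim W"
    using basis_exists by blast
  then obtain w where w: "B = {w}" using assms(2) card_1_singletonE by metis
  show thesis
  proof
    show "w \<noteq> 0" using B(2) w dependent_zero by blast
    show "W = span {w}" using span_subspace[OF B(1,3) assms(1)] w by simp
  qed
qed

lemma finite_span_UN:
  assumes "finite E" "\<And>y. y \<in> E \<Longrightarrow> \<exists>B. finite B \<and> T y \<subseteq> span B"
  obtains F where "finite F" "(\<Union>y\<in>E. T y) \<subseteq> span F"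
proof -
  obtain B where B: "\<And>y. y \<in> E \<Longrightarrow> finite (B y) \<and> T y \<subseteq> span (B y)"
    using assms(2) by metis
  show thesis
  proof
    show "finite (\<Union>y\<in>E. B y)" using assms(1) B by blast
    show "(\<Union>y\<in>E. T y) \<subseteq> span (\<Union>y\<in>E. B y)"
      using B span_mono[of "B _" "\<Union>y\<in>E. B y"] by blast
  qed
qed

end

section \<open>Dimension polymatroids\<close>

lemma (in vector_space) polymatroid_dim_span_UN:
  assumes "finite E" "finite F" "(\<Union>y\<in>E. T y) \<subseteq> span F"
  shows "polymatroid E (\<lambda>S. real (dim (span (\<Union>y\<in>S. T y))))"
proof -
  define G where "G S = span (\<Union>y\<in>S. T y)" for S
  have G_fin: "G S \<subseteq> span F" if "S \<subseteq> E" for S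
    unfolding G_def using assms(3) that by (intro span_minimal) blast+
  have G_mono: "G S \<subseteq> G S'" if "S \<subseteq> S'" for S S'
    unfolding G_def using that by (intro span_mono) blast
  show ?thesis
    unfolding polymatroid_def G_def[symmetric]
  proof (intro conjI allI impI)
    show "finite E" by fact
    show "real (dim (G {})) = 0" using dim_zero_subspace by (simp add: G_def)
  next
    fix S S' assume "S \<subseteq> S' \<and> S' \<subseteq> E"
    then show "real (dim (G S)) \<le> real (dim (G S'))"
      using dim_mono_finite_span[OF G_mono \<open>finite F\<close> G_fin] by simp
  next
    fix S S' assume S: "S \<subseteq> E \<and> S' \<subseteq> E"
    have "G (S \<union> S') = span (G S \<union> G S')"
      unfolding G_def UN_Un by (metis span_Un_span_left sup_commute)
    moreover have "dim (G (S \<inter> S')) \<le> dim (G S \<inter> G S')"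
    proof (rule dim_mono_finite_span[OF _ \<open>finite F\<close>])
      show "G (S \<inter> S') \<subseteq> G S \<inter> G S'" using G_mono by blast
      show "G S \<inter> G S' \<subseteq> span F" using G_fin S by blast
    qed
    moreover have "dim (span (G S \<union> G S')) + dim (G S \<inter> G S') = dim (G S) + dim (G S')"
      using S G_fin \<open>finite F\<close> by (intro dim_span_Un_add_dim_Int) (auto simp: G_def)
    ultimately show "real (dim (G (S \<union> S'))) + real (dim (G (S \<inter> S'))) \<le>
        real (dim (G S)) + real (dim (G S'))"
      by simp
  qed
qed

lemma polymatroid_cong:
  assumes "polymatroid E f" and fg: "\<And>S. S \<subseteq> E \<Longrightarrow> f S = g S"
  shows "polymatroid E g"
  unfolding polymatroid_def
proof (intro conjI allI impI)
  show "finite E" "g {} = 0" using assms fg[of "{}"] by (simp_all add: polymatroid_def)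
next
  fix S T assume ST: "S \<subseteq> T \<and> T \<subseteq> E"
  then have "f S \<le> f T" using assms(1) by (simp add: polymatroid_def)
  moreover have "f S = g S" "f T = g T" using ST fg by auto
  ultimately show "g S \<le> g T" by simp
next
  fix S T assume ST: "S \<subseteq> E \<and> T \<subseteq> E"
  then have "f (S \<union> T) + f (S \<inter> T) \<le> f S + f T" using assms(1) by (simp add: polymatroid_def)
  moreover have "f S = g S" "f T = g T" "f (S \<union> T) = g (S \<union> T)" "f (S \<inter> T) = g (S \<inter> T)"
    using ST fg[of S] fg[of T] fg[of "S \<union> T"] fg[of "S \<inter> T"] by auto
  ultimately show "g (S \<union> T) + g (S \<inter> T) \<le> g S + g T" by simp
qed

lemma is_tensor_product_U23I:
  assumes "polymatroid (E \<times> {1,2,3}) g" "f {} = 0"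
    and union: "\<And>A1 A2 A3. A1 \<subseteq> E \<Longrightarrow> A2 \<subseteq> E \<Longrightarrow> A3 \<subseteq> E \<Longrightarrow>
      g (A1 \<times> {1} \<union> A2 \<times> {2} \<union> A3 \<times> {3}) = f A1 + f A2 + f A3 - h A1 A2 A3"
    and "\<And>S. S \<subseteq> E \<Longrightarrow> h S S S = f S"
    and "\<And>A2 A3. h {} A2 A3 = 0" "\<And>A1 A3. h A1 {} A3 = 0" "\<And>A1 A2. h A1 A2 {} = 0"
  shows "is_tensor_product E f {1,2,3} U23_rank g"
  unfolding is_tensor_product_def
proof (intro conjI allI impI)
  fix S T assume ST: "S \<subseteq> E \<and> T \<subseteq> {1, 2, 3::nat}"
  define A where "A i = (if i \<in> T then S else {})" for i :: nat
  have "S \<times> T = A 1 \<times> {1} \<union> A 2 \<times> {2} \<union> A 3 \<times> {3}" using ST by (auto simp: A_def)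
  then have g: "g (S \<times> T) = f (A 1) + f (A 2) + f (A 3) - h (A 1) (A 2) (A 3)"
    using union ST by (simp add: A_def)
  have "T \<in> Pow {1, 2, 3}" using ST by blast
  then show "g (S \<times> T) = f S * U23_rank T"
    unfolding g
    by (simp add: Pow_insert A_def U23_rank_def assms ST) (elim disjE; simp add: assms ST)
qed (rule assms(1))

section \<open>Lines in \<open>K\<^sup>2\<close>\<close>

lemma vector_space_K2: "vector_space (K2_scale :: 'k::field \<Rightarrow> _)"
  by unfold_locales (auto simp: pair_scale_def algebra_simps)

definition det2 :: "'k::field \<times> 'k \<Rightarrow> 'k \<times> 'k \<Rightarrow> 'k" where
  "det2 v w = fst v * snd w - snd v * fst w"

lemma det2_0_left [simp]: "det2 0 w = 0" and det2_0_right [simp]: "det2 v 0 = 0"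
  by (simp_all add: det2_def)

lemma det2_swap: "det2 w v = - det2 v w"
  by (simp add: det2_def algebra_simps)

lemma K2_cramer:
  assumes "det2 v w \<noteq> 0"
  shows "x = K2_scale (det2 x w / det2 v w) v + K2_scale (det2 v x / det2 v w) w"
proof -
  obtain a b c d p q where "v = (a, b)" "w = (c, d)" "x = (p, q)" by (cases v, cases w, cases x)
  with assms show ?thesis
    by (simp add: det2_def pair_scale_def divide_simps) (simp add: algebra_simps)
qed

lemma K2_combination_of_third_line:
  assumes "det2 w1 w2 \<noteq> 0" "det2 w1 w3 \<noteq> 0" "det2 w2 w3 \<noteq> 0"
  obtains \<alpha> \<beta> where "\<alpha> \<noteq> 0" "\<beta> \<noteq> 0" "w3 = K2_scale \<alpha> w1 + K2_scale \<beta> w2"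
proof
  show "det2 w3 w2 / det2 w1 w2 \<noteq> 0" "det2 w1 w3 / det2 w1 w2 \<noteq> 0"
    using assms det2_swap[of w3 w2] by auto
qed (rule K2_cramer[OF assms(1)])

lemma K2_in_span_singleton_if_det2_eq_0:
  fixes v w :: "'k::field \<times> 'k"
  assumes "v \<noteq> 0" "det2 v w = 0"
  shows "w \<in> module.span K2_scale {v}"
proof -
  interpret K: vector_space "K2_scale :: 'k \<Rightarrow> _" by (rule vector_space_K2)
  have "w = K2_scale (fst w / fst v) v" if "fst v \<noteq> 0"
    using that assms(2) by (cases v, cases w) (simp add: det2_def pair_scale_def field_simps)
  moreover have "w = K2_scale (snd w / snd v) v" if "snd v \<noteq> 0"
    using that assms(2) by (cases v, cases w) (simp add: det2_def pair_scale_def field_simps)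
  moreover have "fst v \<noteq> 0 \<or> snd v \<noteq> 0" using assms(1) by (cases v) (auto simp: zero_prod_def)
  ultimately show ?thesis using K.span_singleton by auto
qed

lemma K2_det2_neq_0_if_lines_neq:
  fixes v w :: "'k::field \<times> 'k"
  assumes "v \<noteq> 0" "w \<noteq> 0"
    and "module.span K2_scale {v} \<noteq> module.span K2_scale {w}"
  shows "det2 v w \<noteq> 0"
proof
  interpret K: vector_space "K2_scale :: 'k \<Rightarrow> _" by (rule vector_space_K2)
  assume "det2 v w = 0"
  then have "w \<in> K.span {v}" "v \<in> K.span {w}"
    using assms(1,2) det2_swap[of v w] by (auto intro: K2_in_span_singleton_if_det2_eq_0)
  then show False using assms(3) K.span_eq[of "{v}" "{w}"] by simp
qed

lemma K2_generators_of_distinct_lines: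
  fixes W :: "nat \<Rightarrow> ('k::field \<times> 'k) set"
  assumes "\<And>i. i \<in> {1,2,3} \<Longrightarrow> module.subspace K2_scale (W i)"
    and "\<And>i. i \<in> {1,2,3} \<Longrightarrow> vector_space.dim K2_scale (W i) = 1"
    and "W 1 \<noteq> W 2" "W 1 \<noteq> W 3" "W 2 \<noteq> W 3"
  obtains w where "\<And>i. i \<in> {1,2,3} \<Longrightarrow> W i = module.span K2_scale {w i}"
    and "det2 (w 1) (w 2) \<noteq> 0" "det2 (w 1) (w 3) \<noteq> 0" "det2 (w 2) (w 3) \<noteq> 0"
proof -
  interpret K: vector_space "K2_scale :: 'k \<Rightarrow> _" by (rule vector_space_K2)
  have "\<exists>w. w \<noteq> 0 \<and> W i = K.span {w}" if "i \<in> {1,2,3}" for i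
    using K.one_dim_subspace_eq_span_singleton[OF assms(1,2)[OF that]] by metis
  then obtain w where w: "\<And>i. i \<in> {1,2,3} \<Longrightarrow> w i \<noteq> 0 \<and> W i = K.span {w i}" by metis
  moreover have "det2 (w 1) (w 2) \<noteq> 0" "det2 (w 1) (w 3) \<noteq> 0" "det2 (w 2) (w 3) \<noteq> 0"
    using K2_det2_neq_0_if_lines_neq w assms(3-5) by (metis insertI1 insertI2)+
  ultimately show thesis using that by blast
qed

section \<open>Tensoring with a vector of \<open>K\<^sup>2\<close>\<close>

lemma vector_space_pair_scale:
  assumes "vector_space s"
  shows "vector_space (pair_scale s)"
proof -
  interpret vector_space s by (rule assms)
  show ?thesis
    by unfold_locales (auto simp: pair_scale_def scale_right_distrib scale_left_distrib)
qed

definition tensor_with :: "('k::field \<Rightarrow> 'v::ab_group_add \<Rightarrow> 'v) \<Rightarrow> 'k \<times> 'k \<Rightarrow> 'v \<Rightarrow> 'v \<times> 'v" where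
  "tensor_with s w u = (s (fst w) u, s (snd w) u)"

context vector_space
begin

lemma linear_tensor_with: "module_hom scale (pair_scale scale) (tensor_with scale w)"
proof -
  interpret P: vector_space "pair_scale scale" by (rule vector_space_pair_scale) unfold_locales
  show ?thesis
    by unfold_locales (auto simp: tensor_with_def pair_scale_def scale_right_distrib mult.commute)
qed

lemma inj_tensor_with:
  assumes "w \<noteq> 0"
  shows "inj (tensor_with scale w)"
proof (rule injI)
  fix x y assume "tensor_with scale w x = tensor_with scale w y"
  then have "scale (fst w) x = scale (fst w) y" "scale (snd w) x = scale (snd w) y"
    by (auto simp: tensor_with_def)
  moreover have "fst w \<noteq> 0 \<or> snd w \<noteq> 0" using assms by (cases w) (auto simp: zero_prod_def)
  ultimately show "x = y" by auto
qed

lemma tensor_with_zero [simp]: "tensor_with scale w 0 = 0"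
  by (simp add: tensor_with_def zero_prod_def)

lemma tensor_with_add: "tensor_with scale (v + w) x = tensor_with scale v x + tensor_with scale w x"
  by (simp add: tensor_with_def scale_left_distrib)

lemma tensor_with_K2_scale: "tensor_with scale (K2_scale c w) x = tensor_with scale w (scale c x)"
  by (simp add: tensor_with_def pair_scale_def mult.commute)

lemma tensor_with_eq_tensor_with_imp_zero:
  assumes "det2 v w \<noteq> 0" "tensor_with scale v x = tensor_with scale w y"
  shows "x = 0" "y = 0"
proof -
  have e: "scale (fst v) x = scale (fst w) y" "scale (snd v) x = scale (snd w) y"
    using assms(2) by (auto simp: tensor_with_def)
  have "scale (snd w) (scale (fst v) x) = scale (fst w) (scale (snd w) y)"
    using e(1) by (simp add: mult.commute)
  also have "\<dots> = scale (fst w) (scale (snd v) x)" using e(2) by simp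
  finally have "scale (det2 v w) x = 0"
    by (simp add: det2_def scale_left_diff_distrib mult.commute)
  then show x: "x = 0" using assms(1) by simp
  have "scale (fst w) y = 0" "scale (snd w) y = 0" using e x by auto
  moreover have "fst w \<noteq> 0 \<or> snd w \<noteq> 0" using assms(1) by (auto simp: det2_def)
  ultimately show "y = 0" by auto
qed

lemma subspace_tensor_with_image:
  "subspace U \<Longrightarrow> module.subspace (pair_scale scale) (tensor_with scale w ` U)"
  using module_hom.subspace_image[OF linear_tensor_with] .

lemma dim_tensor_with_image:
  "w \<noteq> 0 \<Longrightarrow> subspace U \<Longrightarrow> vector_space.dim (pair_scale scale) (tensor_with scale w ` U) = dim U"
  by (intro dim_image_inj vector_space_pair_scale linear_tensor_with inj_tensor_with) unfold_locales

lemma tensor_with_image_subset_span: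
  "U \<subseteq> span F \<Longrightarrow>
    tensor_with scale w ` U \<subseteq> module.span (pair_scale scale) (tensor_with scale w ` F)"
  using module_hom.span_image[OF linear_tensor_with] by blast

lemma tensor_with_images_Int:
  assumes "det2 v w \<noteq> 0"
  shows "tensor_with scale v ` U \<inter> tensor_with scale w ` U' \<subseteq> {0}"
proof
  fix p assume "p \<in> tensor_with scale v ` U \<inter> tensor_with scale w ` U'"
  then obtain u u' where "p = tensor_with scale v u" "p = tensor_with scale w u'" by blast
  then show "p \<in> {0}" using tensor_with_eq_tensor_with_imp_zero(1)[OF assms] by force
qed

lemma tensor_sub_span_singleton:
  assumes "subspace U"
  shows "tensor_sub scale U (module.span K2_scale {w}) = tensor_with scale w ` U"
proof -
  interpret K: vector_space "K2_scale :: 'a \<Rightarrow> _" by (rule vector_space_K2)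
  interpret t: module_hom scale "pair_scale scale" "tensor_with scale w"
    by (rule linear_tensor_with)
  have generators: "{(scale (fst w') u, scale (snd w') u) | u w'. u \<in> U \<and> w' \<in> K.span {w}} =
      tensor_with scale w ` U"
  proof (intro equalityI subsetI)
    fix p assume "p \<in> {(scale (fst w') u, scale (snd w') u) | u w'. u \<in> U \<and> w' \<in> K.span {w}}"
    then obtain u w' where "u \<in> U" "w' \<in> K.span {w}" "p = tensor_with scale w' u"
      unfolding tensor_with_def by blast
    moreover from \<open>w' \<in> K.span {w}\<close> obtain c where "w' = K2_scale c w"
      by (auto simp: K.span_singleton)
    ultimately show "p \<in> tensor_with scale w ` U"
      using subspace_scale[OF assms] by (auto simp: tensor_with_K2_scale)
  next
    fix p assume "p \<in> tensor_with scale w ` U"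
    moreover have "w \<in> K.span {w}" by (simp add: K.span_base)
    ultimately show "p \<in> {(scale (fst w') u, scale (snd w') u) | u w'. u \<in> U \<and> w' \<in> K.span {w}}"
      unfolding tensor_with_def by blast
  qed
  then show ?thesis
    unfolding tensor_sub_def generators t.span_image span_eq_iff[THEN iffD2, OF assms] ..
qed

lemma span_tensor_images_Int:
  assumes U: "subspace U1" "subspace U2" "subspace U3"
    and d: "det2 w1 w2 \<noteq> 0" "det2 w1 w3 \<noteq> 0" "det2 w2 w3 \<noteq> 0"
  shows "module.span (pair_scale scale) (tensor_with scale w1 ` U1 \<union> tensor_with scale w2 ` U2)
      \<inter> tensor_with scale w3 ` U3 = tensor_with scale w3 ` (U1 \<inter> U2 \<inter> U3)"
proof -
  interpret P: vector_space "pair_scale scale" by (rule vector_space_pair_scale) unfold_locales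
  interpret t1: module_hom scale "pair_scale scale" "tensor_with scale w1"
    by (rule linear_tensor_with)
  interpret t2: module_hom scale "pair_scale scale" "tensor_with scale w2"
    by (rule linear_tensor_with)
  obtain \<alpha> \<beta> where "\<alpha> \<noteq> 0" "\<beta> \<noteq> 0" "w3 = K2_scale \<alpha> w1 + K2_scale \<beta> w2"
    using K2_combination_of_third_line[OF d] .
  then have w3: "tensor_with scale w3 u =
      tensor_with scale w1 (scale \<alpha> u) + tensor_with scale w2 (scale \<beta> u)" for u
    by (simp add: tensor_with_add tensor_with_K2_scale)
  have sums: "P.span (tensor_with scale w1 ` U1 \<union> tensor_with scale w2 ` U2) =
      {p + q | p q. p \<in> tensor_with scale w1 ` U1 \<and> q \<in> tensor_with scale w2 ` U2}"
    using U(1,2) by (intro P.span_Un_subspaces subspace_tensor_with_image)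
  show ?thesis
  proof (intro equalityI subsetI)
    fix p assume "p \<in> P.span (tensor_with scale w1 ` U1 \<union> tensor_with scale w2 ` U2)
        \<inter> tensor_with scale w3 ` U3"
    then obtain u1 u2 u3 where u: "u1 \<in> U1" "u2 \<in> U2" "u3 \<in> U3"
      and p: "p = tensor_with scale w1 u1 + tensor_with scale w2 u2" "p = tensor_with scale w3 u3"
      unfolding sums by blast
    have "tensor_with scale w1 (u1 - scale \<alpha> u3) = tensor_with scale w2 (scale \<beta> u3 - u2)"
      using p w3[of u3] by (simp add: t1.diff t2.diff algebra_simps)
    then have "u1 - scale \<alpha> u3 = 0" "scale \<beta> u3 - u2 = 0"
      by (rule tensor_with_eq_tensor_with_imp_zero[OF d(1)])+
    then have "u1 = scale \<alpha> u3" "u2 = scale \<beta> u3" by simp_all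
    then have "u3 = scale (inverse \<alpha>) u1" "u3 = scale (inverse \<beta>) u2"
      using \<open>\<alpha> \<noteq> 0\<close> \<open>\<beta> \<noteq> 0\<close> by simp_all
    then have "u3 \<in> U1" "u3 \<in> U2" using U(1,2) u(1,2) subspace_scale by metis+
    then show "p \<in> tensor_with scale w3 ` (U1 \<inter> U2 \<inter> U3)" using u(3) p(2) by blast
  next
    fix p assume "p \<in> tensor_with scale w3 ` (U1 \<inter> U2 \<inter> U3)"
    then obtain u where u: "u \<in> U1" "u \<in> U2" "u \<in> U3" and p: "p = tensor_with scale w3 u"
      by blast
    have "scale \<alpha> u \<in> U1" "scale \<beta> u \<in> U2" using U(1,2) u(1,2) subspace_scale by blast+
    then show "p \<in> P.span (tensor_with scale w1 ` U1 \<union> tensor_with scale w2 ` U2)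
        \<inter> tensor_with scale w3 ` U3"
      unfolding sums p w3 using u(3) w3[of u] by blast
  qed
qed

lemma dim_span_tensor_images:
  assumes U: "subspace U1" "subspace U2" "subspace U3"
    and F: "finite F" "U1 \<subseteq> span F" "U2 \<subseteq> span F" "U3 \<subseteq> span F"
    and d: "det2 w1 w2 \<noteq> 0" "det2 w1 w3 \<noteq> 0" "det2 w2 w3 \<noteq> 0"
  shows "vector_space.dim (pair_scale scale) (module.span (pair_scale scale)
      (tensor_with scale w1 ` U1 \<union> tensor_with scale w2 ` U2 \<union> tensor_with scale w3 ` U3))
    + dim (U1 \<inter> U2 \<inter> U3) = dim U1 + dim U2 + dim U3"
proof -
  interpret P: vector_space "pair_scale scale" by (rule vector_space_pair_scale) unfold_locales
  define R1 where "R1 = tensor_with scale w1 ` U1"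
  define R2 where "R2 = tensor_with scale w2 ` U2"
  define R3 where "R3 = tensor_with scale w3 ` U3"
  define F' where
    "F' = tensor_with scale w1 ` F \<union> tensor_with scale w2 ` F \<union> tensor_with scale w3 ` F"
  have "finite F'" using F(1) by (simp add: F'_def)
  have "P.span (tensor_with scale w ` F) \<subseteq> P.span F'" if "w \<in> {w1, w2, w3}" for w
    using that unfolding F'_def by (intro P.span_mono) blast
  then have R_fin: "R1 \<subseteq> P.span F'" "R2 \<subseteq> P.span F'" "R3 \<subseteq> P.span F'"
    unfolding R1_def R2_def R3_def
    using tensor_with_image_subset_span[OF F(2), of w1]
      tensor_with_image_subset_span[OF F(3), of w2]
      tensor_with_image_subset_span[OF F(4), of w3] by blast+
  have R_sub: "P.subspace R1" "P.subspace R2" "P.subspace R3"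
    unfolding R1_def R2_def R3_def using U by (simp_all add: subspace_tensor_with_image)
  have "w1 \<noteq> 0" "w2 \<noteq> 0" "w3 \<noteq> 0" using d by auto
  then have R_dim: "P.dim R1 = dim U1" "P.dim R2 = dim U2" "P.dim R3 = dim U3"
    unfolding R1_def R2_def R3_def using U by (simp_all add: dim_tensor_with_image)
  have "R1 \<inter> R2 \<subseteq> {0}" unfolding R1_def R2_def by (rule tensor_with_images_Int[OF d(1)])
  then have "R1 \<inter> R2 = {0}" using P.subspace_0[OF R_sub(1)] P.subspace_0[OF R_sub(2)] by blast
  then have "P.dim (P.span (R1 \<union> R2)) = dim U1 + dim U2"
    using P.dim_span_Un_add_dim_Int[OF R_sub(1,2) \<open>finite F'\<close> R_fin(1,2)] R_dim
    by (simp add: P.dim_zero_subspace)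
  moreover have "P.dim (P.span (P.span (R1 \<union> R2) \<union> R3)) + P.dim (P.span (R1 \<union> R2) \<inter> R3) =
      P.dim (P.span (R1 \<union> R2)) + P.dim R3"
  proof (rule P.dim_span_Un_add_dim_Int[OF P.subspace_span R_sub(3) \<open>finite F'\<close> _ R_fin(3)])
    show "P.span (R1 \<union> R2) \<subseteq> P.span F'"
      using R_fin(1,2) P.span_minimal[of "R1 \<union> R2" "P.span F'"] by simp
  qed
  moreover have "P.span (P.span (R1 \<union> R2) \<union> R3) = P.span (R1 \<union> R2 \<union> R3)"
    by (rule P.span_Un_span_left)
  moreover have "P.dim (P.span (R1 \<union> R2) \<inter> R3) = dim (U1 \<inter> U2 \<inter> U3)"
    unfolding R1_def R2_def R3_def span_tensor_images_Int[OF U d]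
    using \<open>w3 \<noteq> 0\<close> U by (simp add: dim_tensor_with_image subspace_inter)
  ultimately have "P.dim (P.span (R1 \<union> R2 \<union> R3)) + dim (U1 \<inter> U2 \<inter> U3) = dim U1 + dim U2 + dim U3"
    using R_dim(3) by (simp del: P.dim_span)
  then show ?thesis by (simp only: R1_def R2_def R3_def)
qed

lemma dim_span_tensor_family:
  fixes w :: "nat \<Rightarrow> 'a \<times> 'a"
  assumes F: "finite F" "(\<Union>x\<in>E. Vs x) \<subseteq> span F"
    and A: "A1 \<subseteq> E" "A2 \<subseteq> E" "A3 \<subseteq> E"
    and d: "det2 (w 1) (w 2) \<noteq> 0" "det2 (w 1) (w 3) \<noteq> 0" "det2 (w 2) (w 3) \<noteq> 0"
  shows "vector_space.dim (pair_scale scale) (module.span (pair_scale scale)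
      (\<Union>(x, i)\<in>A1 \<times> {1} \<union> A2 \<times> {2} \<union> A3 \<times> {3}. tensor_with scale (w i) ` Vs x))
    + dim (span (\<Union>x\<in>A1. Vs x) \<inter> span (\<Union>x\<in>A2. Vs x) \<inter> span (\<Union>x\<in>A3. Vs x))
    = dim (span (\<Union>x\<in>A1. Vs x)) + dim (span (\<Union>x\<in>A2. Vs x)) + dim (span (\<Union>x\<in>A3. Vs x))"
proof -
  interpret P: vector_space "pair_scale scale" by (rule vector_space_pair_scale) unfold_locales
  have "(\<Union>(x, i)\<in>A1 \<times> {1} \<union> A2 \<times> {2} \<union> A3 \<times> {3::nat}. tensor_with scale (w i) ` Vs x) =
      tensor_with scale (w 1) ` (\<Union>x\<in>A1. Vs x) \<union> tensor_with scale (w 2) ` (\<Union>x\<in>A2. Vs x)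
      \<union> tensor_with scale (w 3) ` (\<Union>x\<in>A3. Vs x)"
    by blast
  then have span_eq:
    "P.span (\<Union>(x, i)\<in>A1 \<times> {1} \<union> A2 \<times> {2} \<union> A3 \<times> {3}. tensor_with scale (w i) ` Vs x) =
      P.span (tensor_with scale (w 1) ` span (\<Union>x\<in>A1. Vs x)
        \<union> tensor_with scale (w 2) ` span (\<Union>x\<in>A2. Vs x)
        \<union> tensor_with scale (w 3) ` span (\<Union>x\<in>A3. Vs x))"
    by (simp add: module_hom.span_image[OF linear_tensor_with, symmetric] P.span_Un3_span)
  have fin: "span (\<Union>x\<in>A1. Vs x) \<subseteq> span F" "span (\<Union>x\<in>A2. Vs x) \<subseteq> span F"
    "span (\<Union>x\<in>A3. Vs x) \<subseteq> span F"
    using F(2) A by (intro span_minimal subspace_span; blast)+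
  show ?thesis
    unfolding span_eq
    by (rule dim_span_tensor_images[OF subspace_span subspace_span subspace_span F(1) fin d])
qed

lemma polymatroid_dim_span_tensor_images:
  fixes w :: "'i \<Rightarrow> 'a \<times> 'a"
  assumes "finite E" "finite I" "finite F" "(\<Union>x\<in>E. Vs x) \<subseteq> span F"
  shows "polymatroid (E \<times> I) (\<lambda>S. real (vector_space.dim (pair_scale scale)
    (module.span (pair_scale scale) (\<Union>(x, i)\<in>S. tensor_with scale (w i) ` Vs x))))"
proof -
  interpret P: vector_space "pair_scale scale" by (rule vector_space_pair_scale) unfold_locales
  define F' where "F' = (\<Union>i\<in>I. tensor_with scale (w i) ` F)"
  have "tensor_with scale (w i) ` Vs x \<subseteq> P.span F'" if "x \<in> E" "i \<in> I" for x i
  proof -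
    have "tensor_with scale (w i) ` Vs x \<subseteq> P.span (tensor_with scale (w i) ` F)"
      using assms(4) that(1) by (intro tensor_with_image_subset_span) blast
    also have "\<dots> \<subseteq> P.span F'" using that(2) unfolding F'_def by (intro P.span_mono) blast
    finally show ?thesis .
  qed
  moreover have "finite F'" using assms(2,3) by (simp add: F'_def)
  ultimately show ?thesis
    using assms(1,2) by (intro P.polymatroid_dim_span_UN) auto
qed

end

theorem proposition4p1:
  fixes scale :: "'k::field \<Rightarrow> 'v::ab_group_add \<Rightarrow> 'v"
    and E :: "'e set"
    and Vs :: "'e \<Rightarrow> 'v set"
    and W :: "nat \<Rightarrow> ('k \<times> 'k) set"
    and f :: "'e set \<Rightarrow> real"
    and g :: "('e \<times> nat) set \<Rightarrow> real"
  assumes vs: "vector_space scale"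
    and finE: "finite E"
    and sub: "\<And>x. x \<in> E \<Longrightarrow> module.subspace scale (Vs x)"
    and fdim: "\<And>x. x \<in> E \<Longrightarrow> \<exists>B. finite B \<and> module.span scale B = Vs x"
    and f_def: "\<And>S. f S = real (vector_space.dim scale (module.span scale (\<Union>x\<in>S. Vs x)))"
    and Wsub: "\<And>i. i \<in> {1,2,3} \<Longrightarrow> module.subspace K2_scale (W i)"
    and Wdim: "\<And>i. i \<in> {1,2,3} \<Longrightarrow> vector_space.dim K2_scale (W i) = 1"
    and Wdist: "W 1 \<noteq> W 2" "W 1 \<noteq> W 3" "W 2 \<noteq> W 3"
    and g_def: "\<And>S. g S = real (vector_space.dim (pair_scale scale)
                   (module.span (pair_scale scale) (\<Union>(x, i)\<in>S. tensor_sub scale (Vs x) (W i))))"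
  shows "is_tensor_product E f {1,2,3} U23_rank g \<and>
    (\<forall>A1 A2 A3. A1 \<subseteq> E \<and> A2 \<subseteq> E \<and> A3 \<subseteq> E \<longrightarrow>
       g ((A1 \<times> {1}) \<union> (A2 \<times> {2}) \<union> (A3 \<times> {3})) =
         f A1 + f A2 + f A3 -
         real (vector_space.dim scale
           (module.span scale (\<Union>x\<in>A1. Vs x) \<inter> module.span scale (\<Union>x\<in>A2. Vs x)
              \<inter> module.span scale (\<Union>x\<in>A3. Vs x))))"
proof -
  interpret V: vector_space scale by (rule vs)
  interpret P: vector_space "pair_scale scale" by (rule vector_space_pair_scale[OF vs])
  obtain w where w: "\<And>i. i \<in> {1,2,3} \<Longrightarrow> W i = module.span K2_scale {w i}"
    and d: "det2 (w 1) (w 2) \<noteq> 0" "det2 (w 1) (w 3) \<noteq> 0" "det2 (w 2) (w 3) \<noteq> 0"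
    using K2_generators_of_distinct_lines[OF Wsub Wdim Wdist] by blast
  obtain F where F: "finite F" "(\<Union>x\<in>E. Vs x) \<subseteq> V.span F"
    using V.finite_span_UN[OF finE] fdim by (metis order_refl)
  define G where "G S = real (P.dim (P.span (\<Union>(x, i)\<in>S. tensor_with scale (w i) ` Vs x)))" for S
  have "tensor_sub scale (Vs x) (W i) = tensor_with scale (w i) ` Vs x"
    if "x \<in> E" "i \<in> {1,2,3}" for x i
    using V.tensor_sub_span_singleton[OF sub[OF that(1)]] w[OF that(2)] by simp
  then have g_G: "g S = G S" if "S \<subseteq> E \<times> {1,2,3}" for S
    unfolding g_def G_def using that
    by (intro arg_cong[where f = "\<lambda>X. real (P.dim (P.span X))"] SUP_cong) auto
  have "polymatroid (E \<times> {1,2,3}) G"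
    unfolding G_def using finE F by (intro V.polymatroid_dim_span_tensor_images) auto
  then have "polymatroid (E \<times> {1,2,3}) g" by (rule polymatroid_cong) (simp add: g_G)
  moreover have "g (A1 \<times> {1} \<union> A2 \<times> {2} \<union> A3 \<times> {3}) = f A1 + f A2 + f A3 -
      real (V.dim (V.span (\<Union>x\<in>A1. Vs x) \<inter> V.span (\<Union>x\<in>A2. Vs x) \<inter> V.span (\<Union>x\<in>A3. Vs x)))"
    if "A1 \<subseteq> E" "A2 \<subseteq> E" "A3 \<subseteq> E" for A1 A2 A3
  proof -
    note dims =
      arg_cong[where f = real, OF V.dim_span_tensor_family[OF F that d], unfolded of_nat_add]
    have "A1 \<times> {1} \<union> A2 \<times> {2} \<union> A3 \<times> {3::nat} \<subseteq> E \<times> {1,2,3}" using that by blast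
    from g_G[OF this] dims show ?thesis unfolding G_def f_def by linarith
  qed
  ultimately show ?thesis
    by (intro conjI is_tensor_product_U23I[where h = "\<lambda>A1 A2 A3. real (V.dim (V.span (\<Union>x\<in>A1. Vs x)
      \<inter> V.span (\<Union>x\<in>A2. Vs x) \<inter> V.span (\<Union>x\<in>A3. Vs x)))"] allI impI)
      (simp_all add: f_def V.dim_zero_subspace V.span_zero Int_insert_left Int_insert_right)
qed

end
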